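(* Let $k\geq 2$, $n,m,p,z$ be nonnegative integers, and let $R\in\mathcal R^n_{m,p,z}\cap\mathcal M$. Let $w$ be chosen uniformly at random from $[k]^n$, and let $B_R$ be the event that $w$ contains a regular pair of twins $(w_1,w_2)$ with $R(w_1,w_2,w)=R$. Then \[ \Pr[B_R]=(1/k)^m(1-1/k)^{p+n-2m-z}. \]
   Context: $[k]=\{1,\dots,k\}$; $w[i]$ is the $i$-th letter of $w$. Two subsequences of $w$ are twins if they are equal as words and use disjoint sets of positions of $w$. Twins $(w_1,w_2)$ are monotone if for every $i$ the $i$-th letter of $w_1$ occurs in $w$ before the $i$-th letter of $w_2$. For monotone twins, $R(w_1,w_2,w)\in\{0,1,2\}^n$ is given by $R[i]=0$ if position $i$ is in neither twin, $1$ if it is in $w_1$, $2$ if it is in $w_2$. Monotone twins are regular if (a) there are no $i<j$ with $R[i]=2$, $R[j]=1$, $R[k']=0$ for all $i<k'<j$, and $w[i]=w[j]$; and (b) there are no $i<j$ with $R[i]\in\{1,2\}$, $R[j]=0$, $R[k']=0$ for all $i<k'<j$, and $w[i]=w[j]$. $\mathcal R^n_m$ is the set of words in $\{0,1,2\}^n$ in which the letters $1$ and $2$ each occur exactly $m$ times. For $R\in\{0,1,2\}^n$, $p(R)$ is the number of occurrences of the pattern consisting of a $2$, followed by zero or more $0$'s, followed by a $1$ (as consecutive letters), and $z(R)$ is the length of the longest prefix of $R$ consisting only of $0$'s. $\mathcal R^n_{m,p,z}=\{R\in\mathcal R^n_m: p(R)=p,\ z(R)=z\}$. $\mathcal M$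 is the set of words in $\{0,1,2\}^n$ in which every prefix contains at least as many $1$'s as $2$'s. *)

theory Defs
  imports Complex_Main
begin

text \<open>Words are lists, indexed from 0. A word over [k] is a list with letters in {1..k}.\<close>

definition words :: "nat \<Rightarrow> nat \<Rightarrow> nat list set" where
  "words k n = {w. length w = n \<and> set w \<subseteq> {1..k}}"

text \<open>A subsequence of w is given by its set of positions I (a subset of {0..<length w});
  the word it spells is nths w I.  Twins: two disjoint position sets spelling the same word.\<close>

definition twins :: "'a list \<Rightarrow> nat set \<Rightarrow> nat set \<Rightarrow> bool" where
  "twins w I1 I2 \<longleftrightarrow> I1 \<subseteq> {0..<length w} \<and> I2 \<subseteq> {0..<length w} \<and>
     I1 \<inter> I2 = {} \<and> nths w I1 = nths w I2"

definition monotone_twins :: "'a list \<Rightarrow> nat set \<Rightarrow> nat set \<Rightarrow> bool" where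
  "monotone_twins w I1 I2 \<longleftrightarrow> twins w I1 I2 \<and>
     (\<forall>i < card I1. sorted_list_of_set I1 ! i < sorted_list_of_set I2 ! i)"

definition Rword :: "nat \<Rightarrow> nat set \<Rightarrow> nat set \<Rightarrow> nat list" where
  "Rword n I1 I2 = map (\<lambda>i. if i \<in> I1 then 1 else if i \<in> I2 then 2 else 0) [0..<n]"

definition regular_twins :: "nat list \<Rightarrow> nat set \<Rightarrow> nat set \<Rightarrow> bool" where
  "regular_twins w I1 I2 \<longleftrightarrow> monotone_twins w I1 I2 \<and>
     (let R = Rword (length w) I1 I2 in
       (\<not> (\<exists>i j. i < j \<and> j < length w \<and> R ! i = 2 \<and> R ! j = 1 \<and>
            (\<forall>k'. i < k' \<and> k' < j \<longrightarrow> R ! k' = 0) \<and> w ! i = w ! j)) \<and>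
       (\<not> (\<exists>i j. i < j \<and> j < length w \<and> R ! i \<in> {1,2} \<and> R ! j = 0 \<and>
            (\<forall>k'. i < k' \<and> k' < j \<longrightarrow> R ! k' = 0) \<and> w ! i = w ! j)))"

definition event_B :: "nat list \<Rightarrow> nat list \<Rightarrow> bool" where
  "event_B R w \<longleftrightarrow> (\<exists>I1 I2. regular_twins w I1 I2 \<and> Rword (length w) I1 I2 = R)"

definition Rset :: "nat \<Rightarrow> nat \<Rightarrow> nat list set" where
  "Rset n m = {R. length R = n \<and> set R \<subseteq> {0,1,2} \<and> count_list R 1 = m \<and> count_list R 2 = m}"

definition pR :: "nat list \<Rightarrow> nat" where
  "pR R = card {(i,j). i < j \<and> j < length R \<and> R ! i = 2 \<and> R ! j = 1 \<and>
                       (\<forall>k'. i < k' \<and> k' < j \<longrightarrow> R ! k' = 0)}"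

definition zR :: "nat list \<Rightarrow> nat" where
  "zR R = length (takeWhile (\<lambda>x. x = 0) R)"

definition Rset_mpz :: "nat \<Rightarrow> nat \<Rightarrow> nat \<Rightarrow> nat \<Rightarrow> nat list set" where
  "Rset_mpz n m p z = {R \<in> Rset n m. pR R = p \<and> zR R = z}"

definition Mset :: "nat list set" where
  "Mset = {R. \<forall>t \<le> length R. count_list (take t R) 2 \<le> count_list (take t R) 1}"

end

theory Submission
  imports Defs
begin

text \<open>For R in M, the twins realising R are forced: w1 and w2 must occupy the positions of
  the 1s and of the 2s of R, and the prefix condition of M makes the t-th 2 come after the
  t-th 1, so monotonicity is automatic.  The event B_R is then a conjunction of conditions,
  one per position j, each involving only w[0..j]: a 2 must copy the letter of its partner 1,
  and a 0 or 1 must avoid the letter of at most one earlier position (the last nonzero one,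
  when the regularity clauses apply).  Choosing letters from left to right therefore gives
  1, k or k-1 choices at each position, and the positions with k-1 choices are the p end
  positions of the patterns 2 0* 1 together with the n-2m-z zeros after the first nonzero
  letter.\<close>

lemma finite_words: "finite (words k n)"
  using finite_lists_length_eq[of "{1..k}" n] by (simp add: words_def conj_commute)

lemma card_words: "card (words k n) = k ^ n"
  using card_lists_length_eq[of "{1..k}" n] by (simp add: words_def conj_commute)

lemma words_Suc: "words k (Suc n) = (\<lambda>(u, x). u @ [x]) ` (words k n \<times> {1..k})"
  by (force simp: words_def length_Suc_conv_rev)

lemma card_words_prefix_constraints:
  assumes "\<And>j w. j < n \<Longrightarrow> j < length w \<Longrightarrow> P j w = P j (take (Suc j) w)"
    and "\<And>j u. j < n \<Longrightarrow> u \<in> words k j \<Longrightarrow> card {x \<in> {1..k}. P j (u @ [x])} = c j"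
  shows "card {w \<in> words k n. \<forall>j<n. P j w} = (\<Prod>j<n. c j)"
  using assms
proof (induction n)
  case 0
  have "words k 0 = {[]}" by (auto simp: words_def)
  then show ?case by simp
next
  case (Suc n)
  let ?S = "{u \<in> words k n. \<forall>j<n. P j u}"
  have IH: "card ?S = (\<Prod>j<n. c j)"
  proof (rule Suc.IH)
    show "P j w = P j (take (Suc j) w)" if "j < n" "j < length w" for j w
      using that by (intro Suc.prems(1)) simp_all
    show "card {x \<in> {1..k}. P j (u @ [x])} = c j" if "j < n" "u \<in> words k j" for j u
      using that by (intro Suc.prems(2)) simp_all
  qed
  have prefix: "P j (u @ [x]) = P j u" if "u \<in> words k n" "j < n" for u x j
  proof -
    have "length u = n" using that(1) by (simp add: words_def)
    then have "P j (u @ [x]) = P j (take (Suc j) u)"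
      using Suc.prems(1)[of j "u @ [x]"] that(2) by simp
    also have "\<dots> = P j u"
      using Suc.prems(1)[of j u] that(2) \<open>length u = n\<close> by simp
    finally show ?thesis .
  qed
  have "{w \<in> words k (Suc n). \<forall>j<Suc n. P j w}
      = (\<lambda>(u, x). u @ [x]) ` (SIGMA u:?S. {x \<in> {1..k}. P n (u @ [x])})"
    unfolding words_Suc using prefix by (auto simp: less_Suc_eq)
  moreover have "inj_on (\<lambda>(u, x). u @ [x]) (SIGMA u:?S. {x \<in> {1..k}. P n (u @ [x])})"
    by (auto simp: inj_on_def)
  ultimately have "card {w \<in> words k (Suc n). \<forall>j<Suc n. P j w}
      = (\<Sum>u\<in>?S. card {x \<in> {1..k}. P n (u @ [x])})"
    using finite_words[of k n] by (simp add: card_image)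
  also have "\<dots> = card ?S * c n"
    using Suc.prems(2) by simp
  finally show ?case using IH by simp
qed

lemma card_less_nth_sorted_list_of_set:
  fixes A :: "nat set"
  assumes "finite A" "t < card A"
  shows "card {i \<in> A. i < sorted_list_of_set A ! t} = t"
proof -
  let ?s = "sorted_list_of_set A"
  have sorted: "sorted_wrt (<) ?s" and len: "length ?s = card A" and set: "set ?s = A"
    using assms(1) by simp_all
  have "{i \<in> A. i < ?s ! t} = set (take t ?s)"
  proof (intro set_eqI iffI)
    fix x assume "x \<in> {i \<in> A. i < ?s ! t}"
    then obtain l where l: "l < length ?s" "x = ?s ! l" "?s ! l < ?s ! t"
      by (metis (mono_tags, lifting) in_set_conv_nth mem_Collect_eq set)
    then have "l < t"
      using sorted_wrt_nth_less[OF sorted, of t l] assms(2) len by (cases "t = l") force+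
    then show "x \<in> set (take t ?s)" using l by (auto simp: in_set_conv_nth)
  next
    fix x assume "x \<in> set (take t ?s)"
    then obtain l where "l < t" "x = ?s ! l"
      using assms(2) len by (auto simp: in_set_conv_nth)
    then show "x \<in> {i \<in> A. i < ?s ! t}"
      using sorted_wrt_nth_less[OF sorted, of l t] assms(2) len set nth_mem[of l ?s] by auto
  qed
  moreover have "card (set (take t ?s)) = t"
    using assms(2) len by (simp add: distinct_card)
  ultimately show ?thesis by simp
qed

lemma nth_sorted_list_of_set_card_less:
  fixes A :: "nat set"
  assumes "finite A" "j \<in> A"
  shows "sorted_list_of_set A ! card {i \<in> A. i < j} = j"
proof -
  obtain t where "t < length (sorted_list_of_set A)" "sorted_list_of_set A ! t = j"
    using assms by (metis in_set_conv_nth set_sorted_list_of_set)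
  with card_less_nth_sorted_list_of_set[OF assms(1), of t] show ?thesis by simp
qed

lemma nth_sorted_list_of_set_less:
  fixes A :: "nat set"
  assumes "finite A" "t < card {i \<in> A. i < j}"
  shows "sorted_list_of_set A ! t < j"
proof (rule ccontr)
  have "card {i \<in> A. i < j} \<le> card A"
    using assms(1) by (intro card_mono) auto
  then have t: "t < card A" using assms(2) by simp
  assume "\<not> sorted_list_of_set A ! t < j"
  then have "card {i \<in> A. i < j} \<le> card {i \<in> A. i < sorted_list_of_set A ! t}"
    using assms(1) by (intro card_mono) auto
  then show False
    using card_less_nth_sorted_list_of_set[OF assms(1) t] assms(2) by simp
qed

lemma nths_eq_map_sorted_list_of_set:
  assumes "I \<subseteq> {..<length w}"
  shows "nths w I = map ((!) w) (sorted_list_of_set I)"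
proof -
  have "{i. i < length w \<and> [0..<length w] ! i \<in> I} = I"
    using assms by auto
  then have "nths [0..<length w] I = filter (\<lambda>i. i \<in> I) [0..<length w]"
    by (simp add: filter_eq_nths)
  also have "\<dots> = sorted_list_of_set I"
    using assms finite_subset[OF assms] sorted_wrt_filter[of "(\<le>)" "[0..<length w]"]
    by (intro sorted_distinct_set_unique) auto
  finally have "nths [0..<length w] I = sorted_list_of_set I" .
  moreover have "nths w I = map ((!) w) (nths [0..<length w] I)"
    using nths_map[of "(!) w" "[0..<length w]" I] by (simp add: map_nth)
  ultimately show ?thesis by simp
qed

lemma count_list_take_eq_card:
  assumes "j \<le> length xs"
  shows "count_list (take j xs) a = card {i. i < j \<and> xs ! i = a}"
proof -
  have "{i. i < length (take j xs) \<and> a = take j xs ! i} = {i. i < j \<and> xs ! i = a}"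
    using assms by auto
  then show ?thesis
    by (simp add: count_list_eq_length_filter length_filter_conv_card)
qed

lemma ex_last_below:
  fixes P :: "nat \<Rightarrow> bool"
  shows "i0 < j \<Longrightarrow> P i0 \<Longrightarrow> \<exists>i. i < j \<and> P i \<and> (\<forall>l. i < l \<and> l < j \<longrightarrow> \<not> P l)"
proof (induction j)
  case (Suc j)
  show ?case
  proof (cases "P j")
    case False
    with Suc.prems have "i0 < j" by (auto simp: less_Suc_eq)
    then obtain i where "i < j" "P i" "\<forall>l. i < l \<and> l < j \<longrightarrow> \<not> P l"
      using Suc.IH Suc.prems(2) by blast
    with False show ?thesis by (intro exI[of _ i]) (auto simp: less_Suc_eq)
  qed auto
qed simp

lemma nth_less_zR:
  assumes "j < zR xs"
  shows "xs ! j = 0"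
proof -
  have "takeWhile (\<lambda>x. x = 0) xs ! j \<in> set (takeWhile (\<lambda>x. x = 0) xs)"
    using assms unfolding zR_def by (rule nth_mem)
  then show ?thesis
    using assms takeWhile_nth[of j "\<lambda>x. x = 0" xs] unfolding zR_def
    by (auto dest: set_takeWhileD)
qed

lemma nth_zR: "zR xs < length xs \<Longrightarrow> xs ! zR xs \<noteq> 0"
  unfolding zR_def by (rule nth_length_takeWhile)

lemma Rword_eq_positions:
  assumes "J1 \<subseteq> {0..<n}" "J2 \<subseteq> {0..<n}" "J1 \<inter> J2 = {}" "Rword n J1 J2 = R"
  shows "J1 = {i. i < n \<and> R ! i = 1}" and "J2 = {i. i < n \<and> R ! i = 2}"
proof -
  have R: "R ! i = (if i \<in> J1 then 1 else if i \<in> J2 then 2 else 0)" if "i < n" for i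
    using that unfolding assms(4)[symmetric] Rword_def by simp
  then have "R ! i = 1 \<longleftrightarrow> i \<in> J1" "R ! i = 2 \<longleftrightarrow> i \<in> J2" if "i < n" for i
    using that assms(3) by auto
  then show "J1 = {i. i < n \<and> R ! i = 1}" "J2 = {i. i < n \<and> R ! i = 2}"
    using assms(1,2) by auto
qed

locale twin_pattern =
  fixes R :: "nat list" and n m :: nat
  assumes R_Rset: "R \<in> Rset n m" and R_Mset: "R \<in> Mset"
begin

lemma length_R: "length R = n"
  and count_list_R_1: "count_list R 1 = m"
  and count_list_R_2: "count_list R 2 = m"
  using R_Rset by (simp_all add: Rset_def)

lemma nth_R_cases:
  assumes "i < n"
  shows "R ! i = 0 \<or> R ! i = 1 \<or> R ! i = 2"
proof -
  have "R ! i \<in> set R" using assms length_R by simp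
  then show ?thesis using R_Rset by (auto simp: Rset_def)
qed

definition pos :: "nat \<Rightarrow> nat set" where
  "pos a = {i. i < n \<and> R ! i = a}"

lemma finite_pos [simp]: "finite (pos a)"
  by (simp add: pos_def)

lemma card_pos_less: "j \<le> n \<Longrightarrow> card {i \<in> pos a. i < j} = count_list (take j R) a"
  using count_list_take_eq_card[of j R a] length_R
  by (simp add: pos_def conj_commute cong: conj_cong)

lemma card_pos: "card (pos a) = count_list R a"
proof -
  have "pos a = {i \<in> pos a. i < n}" by (auto simp: pos_def)
  then show ?thesis using card_pos_less[of n a] length_R by simp
qed

text \<open>For R ! j = 2: the 1 of the same rank as this 2, whose letter it must copy.\<close>
definition partner :: "nat \<Rightarrow> nat" where
  "partner j = sorted_list_of_set (pos 1) ! card {i \<in> pos 2. i < j}"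

lemma partner_less:
  assumes "j < n" "R ! j = 2"
  shows "card {i \<in> pos 2. i < j} < m" and "partner j < j"
proof -
  have "count_list (take (Suc j) R) 2 \<le> count_list (take (Suc j) R) 1"
    using R_Mset assms(1) length_R by (simp add: Mset_def)
  moreover have "take (Suc j) R = take j R @ [2]"
    using assms length_R by (simp add: take_Suc_conv_app_nth)
  ultimately have less: "card {i \<in> pos 2. i < j} < card {i \<in> pos 1. i < j}"
    using card_pos_less[of j] assms(1) by simp
  moreover have "card {i \<in> pos 1. i < j} \<le> m"
    using card_pos[of 1] count_list_R_1 card_mono[of "pos 1"] by fastforce
  ultimately show "card {i \<in> pos 2. i < j} < m" by simp
  show "partner j < j"
    unfolding partner_def using less by (intro nth_sorted_list_of_set_less) simp_all
qed

lemma partner_nth_sorted_pos_2: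
  assumes "t < m"
  shows "sorted_list_of_set (pos 2) ! t \<in> pos 2"
    and "partner (sorted_list_of_set (pos 2) ! t) = sorted_list_of_set (pos 1) ! t"
proof -
  have "t < card (pos 2)" using assms card_pos[of 2] count_list_R_2 by simp
  then show "sorted_list_of_set (pos 2) ! t \<in> pos 2"
    using nth_mem[of t "sorted_list_of_set (pos 2)"] by simp
  show "partner (sorted_list_of_set (pos 2) ! t) = sorted_list_of_set (pos 1) ! t"
    unfolding partner_def using card_less_nth_sorted_list_of_set[OF _ \<open>t < card (pos 2)\<close>]
    by simp
qed

lemma nth_sorted_pos_2_rank:
  assumes "j \<in> pos 2"
  shows "j = sorted_list_of_set (pos 2) ! card {i \<in> pos 2. i < j}"
    and "card {i \<in> pos 2. i < j} < m"
  using nth_sorted_list_of_set_card_less[OF _ assms] partner_less(1) assms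
  by (simp_all add: pos_def)

lemma sorted_pos_1_less_sorted_pos_2:
  assumes "t < card (pos 1)"
  shows "sorted_list_of_set (pos 1) ! t < sorted_list_of_set (pos 2) ! t"
proof -
  have "t < m" using assms card_pos[of 1] count_list_R_1 by simp
  then have "sorted_list_of_set (pos 2) ! t \<in> pos 2"
    and "partner (sorted_list_of_set (pos 2) ! t) = sorted_list_of_set (pos 1) ! t"
    by (rule partner_nth_sorted_pos_2)+
  moreover from this(1) have "partner (sorted_list_of_set (pos 2) ! t) < sorted_list_of_set (pos 2) ! t"
    by (intro partner_less(2)) (simp_all add: pos_def)
  ultimately show ?thesis by simp
qed

lemma nths_pos_eq_iff:
  assumes "length w = n"
  shows "nths w (pos 1) = nths w (pos 2) \<longleftrightarrow> (\<forall>j<n. R ! j = 2 \<longrightarrow> w ! j = w ! partner j)"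
proof -
  have "nths w (pos a) = map ((!) w) (sorted_list_of_set (pos a))" for a
    using assms by (intro nths_eq_map_sorted_list_of_set) (auto simp: pos_def)
  then have "nths w (pos 1) = nths w (pos 2) \<longleftrightarrow>
      (\<forall>t<m. w ! (sorted_list_of_set (pos 1) ! t) = w ! (sorted_list_of_set (pos 2) ! t))"
    using card_pos count_list_R_1 count_list_R_2 by (simp add: list_eq_iff_nth_eq)
  also have "\<dots> \<longleftrightarrow> (\<forall>j<n. R ! j = 2 \<longrightarrow> w ! j = w ! partner j)"
  proof (intro iffI allI impI)
    fix j assume copies: "\<forall>t<m. w ! (sorted_list_of_set (pos 1) ! t) = w ! (sorted_list_of_set (pos 2) ! t)"
      and "j < n" "R ! j = 2"
    then have "j \<in> pos 2" by (simp add: pos_def)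
    from nth_sorted_pos_2_rank[OF this] copies show "w ! j = w ! partner j"
      unfolding partner_def by metis
  next
    fix t assume copies: "\<forall>j<n. R ! j = 2 \<longrightarrow> w ! j = w ! partner j" and "t < m"
    from \<open>t < m\<close> have "sorted_list_of_set (pos 2) ! t \<in> pos 2"
      and "partner (sorted_list_of_set (pos 2) ! t) = sorted_list_of_set (pos 1) ! t"
      by (rule partner_nth_sorted_pos_2)+
    with copies show "w ! (sorted_list_of_set (pos 1) ! t) = w ! (sorted_list_of_set (pos 2) ! t)"
      by (simp add: pos_def)
  qed
  finally show ?thesis .
qed

lemma Rword_pos: "Rword n (pos 1) (pos 2) = R"
  unfolding Rword_def pos_def using length_R nth_R_cases
  by (intro nth_equalityI) auto

lemma event_B_iff_regular_twins_pos:
  assumes "length w = n"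
  shows "event_B R w \<longleftrightarrow> regular_twins w (pos 1) (pos 2)"
proof
  assume "event_B R w"
  then obtain J1 J2 where J: "regular_twins w J1 J2" "Rword n J1 J2 = R"
    using assms by (auto simp: event_B_def)
  then have "J1 \<subseteq> {0..<n}" "J2 \<subseteq> {0..<n}" "J1 \<inter> J2 = {}"
    using assms by (auto simp: regular_twins_def monotone_twins_def twins_def)
  from Rword_eq_positions[OF this J(2)] J(1) show "regular_twins w (pos 1) (pos 2)"
    by (simp add: pos_def)
qed (use assms Rword_pos in \<open>auto simp: event_B_def\<close>)

lemma monotone_twins_pos_iff:
  assumes "length w = n"
  shows "monotone_twins w (pos 1) (pos 2) \<longleftrightarrow> (\<forall>j<n. R ! j = 2 \<longrightarrow> w ! j = w ! partner j)"
proof -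
  have "pos 1 \<subseteq> {0..<length w}" "pos 2 \<subseteq> {0..<length w}" "pos 1 \<inter> pos 2 = {}"
    using assms by (auto simp: pos_def)
  then show ?thesis
    unfolding monotone_twins_def twins_def
    using sorted_pos_1_less_sorted_pos_2 nths_pos_eq_iff[OF assms] by blast
qed

text \<open>The earlier position (at most one) whose letter regularity forbids at position j.\<close>
definition clash :: "nat \<Rightarrow> nat set" where
  "clash j = {i. i < j \<and> R ! i \<noteq> 0 \<and> (\<forall>l. i < l \<and> l < j \<longrightarrow> R ! l = 0) \<and>
                 (R ! j = 0 \<or> R ! j = 1 \<and> R ! i = 2)}"

lemma clash_less: "i \<in> clash j \<Longrightarrow> i < j"
  by (simp add: clash_def)

lemma clash_unique:
  assumes "i \<in> clash j" "i' \<in> clash j"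
  shows "i = i'"
proof (rule ccontr)
  assume "i \<noteq> i'"
  then consider "i < i'" | "i' < i" by linarith
  then show False using assms by cases (auto simp: clash_def)
qed

lemma regularity_iff_no_clash:
  "(\<not> (\<exists>i j. i < j \<and> j < n \<and> R ! i = 2 \<and> R ! j = 1 \<and>
        (\<forall>k'. i < k' \<and> k' < j \<longrightarrow> R ! k' = 0) \<and> w ! i = w ! j)) \<and>
   (\<not> (\<exists>i j. i < j \<and> j < n \<and> R ! i \<in> {1,2} \<and> R ! j = 0 \<and>
        (\<forall>k'. i < k' \<and> k' < j \<longrightarrow> R ! k' = 0) \<and> w ! i = w ! j))
   \<longleftrightarrow> (\<forall>j<n. R ! j \<noteq> 2 \<longrightarrow> (\<forall>i\<in>clash j. w ! i \<noteq> w ! j))"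
  (is "\<not> ?bad1 \<and> \<not> ?bad2 \<longleftrightarrow> _")
proof -
  have clash_iff: "R ! j \<noteq> 2 \<and> i \<in> clash j \<longleftrightarrow> i < j \<and> (\<forall>l. i < l \<and> l < j \<longrightarrow> R ! l = 0) \<and>
      (R ! i = 2 \<and> R ! j = 1 \<or> R ! i \<in> {1,2} \<and> R ! j = 0)" if "j < n" for i j
    using nth_R_cases[of i] nth_R_cases[of j] that by (auto simp: clash_def)
  show ?thesis
  proof (intro iffI allI impI ballI notI)
    fix j i assume "\<not> ?bad1 \<and> \<not> ?bad2" "j < n" "R ! j \<noteq> 2" "i \<in> clash j" "w ! i = w ! j"
    with clash_iff[of j i] show False by blast
  next
    assume no_clash: "\<forall>j<n. R ! j \<noteq> 2 \<longrightarrow> (\<forall>i\<in>clash j. w ! i \<noteq> w ! j)"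
    have "w ! i \<noteq> w ! j" if "j < n" "i < j" "\<forall>l. i < l \<and> l < j \<longrightarrow> R ! l = 0"
      "R ! i = 2 \<and> R ! j = 1 \<or> R ! i \<in> {1,2} \<and> R ! j = 0" for i j
      using no_clash clash_iff[of j i] that by blast
    then show "\<not> ?bad1 \<and> \<not> ?bad2" by blast
  qed
qed

definition letter_ok :: "nat \<Rightarrow> nat list \<Rightarrow> bool" where
  "letter_ok j w \<longleftrightarrow> (if R ! j = 2 then w ! j = w ! partner j else \<forall>i\<in>clash j. w ! i \<noteq> w ! j)"

lemma event_B_iff_letter_ok:
  assumes "length w = n"
  shows "event_B R w \<longleftrightarrow> (\<forall>j<n. letter_ok j w)"
proof -
  have "event_B R w \<longleftrightarrow> (\<forall>j<n. R ! j = 2 \<longrightarrow> w ! j = w ! partner j) \<and>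
      (\<forall>j<n. R ! j \<noteq> 2 \<longrightarrow> (\<forall>i\<in>clash j. w ! i \<noteq> w ! j))"
    unfolding event_B_iff_regular_twins_pos[OF assms] regular_twins_def Let_def assms
      Rword_pos monotone_twins_pos_iff[OF assms] regularity_iff_no_clash ..
  then show ?thesis unfolding letter_ok_def by auto
qed

lemma letter_ok_take:
  assumes "j < n" "j < length w"
  shows "letter_ok j w = letter_ok j (take (Suc j) w)"
proof (cases "R ! j = 2")
  case True
  with partner_less(2)[OF assms(1)] show ?thesis by (simp add: letter_ok_def)
next
  case False
  have "\<forall>i\<in>clash j. take (Suc j) w ! i = w ! i"
    by (auto dest: clash_less)
  with False assms(2) show ?thesis by (simp add: letter_ok_def)
qed

definition choices :: "nat \<Rightarrow> nat \<Rightarrow> nat" where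
  "choices k j = (if R ! j = 2 then 1 else if clash j = {} then k else k - 1)"

lemma card_letter_ok_append:
  assumes "j < n" "u \<in> words k j"
  shows "card {x \<in> {1..k}. letter_ok j (u @ [x])} = choices k j"
proof -
  have len: "length u = j" and "set u \<subseteq> {1..k}"
    using assms(2) by (auto simp: words_def)
  then have letters: "u ! i \<in> {1..k}" if "i < j" for i
    using that nth_mem[of i u] by blast
  have nth_append_u: "(u @ [x]) ! i = (if i < j then u ! i else x)" if "i \<le> j" for i x
    using len that by (simp add: nth_append)
  consider (copy) "R ! j = 2" | (free) "R ! j \<noteq> 2" "clash j = {}"
    | (clash) i where "R ! j \<noteq> 2" "clash j = {i}"
    using clash_unique by blast
  then show ?thesis
  proof cases
    case copy
    with partner_less(2)[OF assms(1)] have "{x \<in> {1..k}. letter_ok j (u @ [x])} = {u ! partner j}"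
      using letters[of "partner j"] by (auto simp: letter_ok_def nth_append_u)
    with copy show ?thesis by (simp add: choices_def)
  next
    case free
    then have "{x \<in> {1..k}. letter_ok j (u @ [x])} = {1..k}"
      by (auto simp: letter_ok_def)
    with free show ?thesis by (simp add: choices_def)
  next
    case clash
    then have "i < j" using clash_less by blast
    with clash have "{x \<in> {1..k}. letter_ok j (u @ [x])} = {1..k} - {u ! i}"
      by (auto simp: letter_ok_def nth_append_u)
    with clash letters[OF \<open>i < j\<close>] show ?thesis by (simp add: choices_def)
  qed
qed

definition free_pos :: "nat set" where
  "free_pos = {j. j < n \<and> R ! j \<noteq> 2 \<and> clash j = {}}"

definition clash_pos :: "nat set" where
  "clash_pos = {j. j < n \<and> R ! j \<noteq> 2 \<and> clash j \<noteq> {}}"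

lemma lessThan_n_partition:
  "{..<n} = pos 2 \<union> (free_pos \<union> clash_pos)"
  "pos 2 \<inter> (free_pos \<union> clash_pos) = {}" "free_pos \<inter> clash_pos = {}"
  by (auto simp: pos_def free_pos_def clash_pos_def)

lemma finite_free_pos: "finite free_pos" and finite_clash_pos: "finite clash_pos"
  by (simp_all add: free_pos_def clash_pos_def)

lemma card_partition: "m + card free_pos + card clash_pos = n"
proof -
  have "n = card (pos 2 \<union> (free_pos \<union> clash_pos))"
    using lessThan_n_partition(1) card_lessThan[of n] by simp
  also have "\<dots> = m + card free_pos + card clash_pos"
    using lessThan_n_partition(2,3) finite_free_pos finite_clash_pos card_pos[of 2]
      count_list_R_2 by (simp add: card_Un_disjoint)
  finally show ?thesis by simp
qed

lemma card_event_B: "card {w \<in> words k n. event_B R w} = k ^ card free_pos * (k - 1) ^ card clash_pos"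
proof -
  have "{w \<in> words k n. event_B R w} = {w \<in> words k n. \<forall>j<n. letter_ok j w}"
    using event_B_iff_letter_ok by (auto simp: words_def)
  also have "card \<dots> = (\<Prod>j<n. choices k j)"
    using letter_ok_take card_letter_ok_append by (rule card_words_prefix_constraints)
  also have "\<dots> = (\<Prod>j\<in>pos 2. choices k j) * ((\<Prod>j\<in>free_pos. choices k j) * (\<Prod>j\<in>clash_pos. choices k j))"
    unfolding lessThan_n_partition(1) using lessThan_n_partition(2,3) finite_free_pos finite_clash_pos
    by (simp add: prod.union_disjoint)
  also have "\<dots> = k ^ card free_pos * (k - 1) ^ card clash_pos"
    by (simp add: choices_def pos_def free_pos_def clash_pos_def)
  finally show ?thesis .
qed

lemma count_list_R_0: "count_list R 0 + 2 * m = n"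
proof -
  have "{..<n} = pos 0 \<union> (pos 1 \<union> pos 2)"
    by (auto simp: pos_def dest: nth_R_cases)
  moreover have "pos 0 \<inter> (pos 1 \<union> pos 2) = {}" "pos 1 \<inter> pos 2 = {}"
    by (auto simp: pos_def)
  ultimately have "n = card (pos 0) + (card (pos 1) + card (pos 2))"
    using card_lessThan[of n] by (simp add: card_Un_disjoint)
  then show ?thesis using card_pos count_list_R_1 count_list_R_2 by simp
qed

lemma card_clash_pos_1: "card {j. j < n \<and> R ! j = 1 \<and> clash j \<noteq> {}} = pR R"
proof -
  let ?P = "{(i, j). i < j \<and> j < length R \<and> R ! i = 2 \<and> R ! j = 1 \<and>
                     (\<forall>k'. i < k' \<and> k' < j \<longrightarrow> R ! k' = 0)}"
  have P: "?P = {(i, j). j < n \<and> R ! j = 1 \<and> i \<in> clash j}"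
    using length_R by (auto simp: clash_def)
  have inj: "inj_on snd ?P"
  proof (rule inj_onI)
    fix x y assume "x \<in> ?P" "y \<in> ?P" "snd x = snd y"
    then obtain i i' j where "x = (i, j)" "y = (i', j)" "i \<in> clash j" "i' \<in> clash j"
      unfolding P by (cases x, cases y) auto
    then show "x = y" using clash_unique by simp
  qed
  have image: "snd ` ?P = {j. j < n \<and> R ! j = 1 \<and> clash j \<noteq> {}}"
  proof (intro set_eqI iffI)
    fix j assume "j \<in> {j. j < n \<and> R ! j = 1 \<and> clash j \<noteq> {}}"
    then obtain i where "j < n" "R ! j = 1" "i \<in> clash j" by blast
    then have "(i, j) \<in> ?P" unfolding P by simp
    then show "j \<in> snd ` ?P" by (rule rev_image_eqI) simp
  qed (unfold P, auto)
  show ?thesis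
    unfolding pR_def image[symmetric] by (rule card_image[OF inj])
qed

lemma zR_le: "zR R \<le> n"
  using length_takeWhile_le[of _ R] length_R unfolding zR_def by simp

lemma clash_empty_iff_less_zR:
  assumes "j < n" "R ! j = 0"
  shows "clash j = {} \<longleftrightarrow> j < zR R"
proof
  assume "j < zR R"
  then have "R ! i = 0" if "i < j" for i
    using that by (intro nth_less_zR) simp
  then show "clash j = {}"
    by (auto simp: clash_def)
next
  assume "clash j = {}"
  show "j < zR R"
  proof (rule ccontr)
    assume "\<not> j < zR R"
    moreover have "j \<noteq> zR R" using nth_zR[of R] assms length_R by auto
    ultimately have "zR R < j" by simp
    moreover have "R ! zR R \<noteq> 0" using nth_zR[of R] \<open>zR R < j\<close> assms(1) length_R by simp
    ultimately obtain i where "i < j" "R ! i \<noteq> 0" "\<forall>l. i < l \<and> l < j \<longrightarrow> R ! l = 0"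
      using ex_last_below[of "zR R" j "\<lambda>i. R ! i \<noteq> 0"] by auto
    with assms(2) have "i \<in> clash j" by (simp add: clash_def)
    with \<open>clash j = {}\<close> show False by simp
  qed
qed

lemma card_clash_pos_0: "card {j. j < n \<and> R ! j = 0 \<and> clash j \<noteq> {}} + zR R = count_list R 0"
proof -
  have "pos 0 = {j. j < n \<and> R ! j = 0 \<and> clash j \<noteq> {}} \<union> {..<zR R}"
    using clash_empty_iff_less_zR zR_le nth_less_zR[of _ R] by (auto simp: pos_def)
  moreover have "{j. j < n \<and> R ! j = 0 \<and> clash j \<noteq> {}} \<inter> {..<zR R} = {}"
    using clash_empty_iff_less_zR by auto
  ultimately show ?thesis
    using card_pos[of 0] by (simp add: card_Un_disjoint)
qed

lemma card_clash_pos: "card clash_pos + zR R = pR R + count_list R 0"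
proof -
  have "clash_pos = {j. j < n \<and> R ! j = 1 \<and> clash j \<noteq> {}} \<union> {j. j < n \<and> R ! j = 0 \<and> clash j \<noteq> {}}"
    by (auto simp: clash_pos_def dest: nth_R_cases)
  then have "card clash_pos = pR R + card {j. j < n \<and> R ! j = 0 \<and> clash j \<noteq> {}}"
    using card_clash_pos_1 by (simp add: card_Un_disjoint disjoint_iff)
  then show ?thesis using card_clash_pos_0 by simp
qed

end

lemma power_ratio_eq:
  fixes x :: real
  assumes "x > 0"
  shows "x ^ a * (x - 1) ^ c / (x ^ b * x ^ a * x ^ c) = (1 / x) ^ b * (1 - 1 / x) ^ c"
proof -
  have "1 - 1 / x = (x - 1) / x" using assms by (simp add: field_simps)
  then show ?thesis using assms by (simp add: power_divide)
qed

theorem lemma19: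
  fixes k n m p z :: nat and R :: "nat list"
  assumes "k \<ge> 2"
    and "R \<in> Rset_mpz n m p z \<inter> Mset"
  shows "real (card {w \<in> words k n. event_B R w}) / real (card (words k n))
           = (1 / real k) ^ m * (1 - 1 / real k) ^ (p + n - 2 * m - z)"
proof -
  from assms(2) interpret twin_pattern R n m
    by unfold_locales (simp_all add: Rset_mpz_def)
  let ?F = "card free_pos" and ?C = "card clash_pos"
  have "?C = p + n - 2 * m - z"
    using assms(2) card_clash_pos count_list_R_0 by (simp add: Rset_mpz_def)
  moreover have "real (card {w \<in> words k n. event_B R w}) = real k ^ ?F * (real k - 1) ^ ?C"
    using card_event_B assms(1) by (simp add: of_nat_diff)
  moreover have "card (words k n) = k ^ (m + ?F + ?C)"
    using card_partition card_words by simp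
  then have "real (card (words k n)) = real k ^ m * real k ^ ?F * real k ^ ?C"
    by (simp add: power_add)
  ultimately show ?thesis
    using power_ratio_eq[of "real k"] assms(1) by simp
qed

end
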